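(* Let $Q$ be a meromorphic function on $\mathbb{C}$, not identically zero. Let $M_Q$ be the family of meromorphic functions $f$ on $\mathbb{C}$, not identically zero, satisfying $Q(s)f(s)=Q(1-s)f(1-s)$ for all $s$, and let $H_Q\subset M_Q$ be the subfamily of entire functions in $M_Q$. Let $RM_Q$ (resp. $RH_Q$) be the set of $f\in M_Q$ (resp. $f\in H_Q$) such that all zeros of $\Lambda_Q(f,s):=Q(s)f(s)$ lie on the critical axis $\Re s=1/2$. Then $M_Q\setminus RM_Q$ is open and dense in $M_Q$, and $H_Q\setminus RH_Q$ is open and dense in $H_Q$.
   Context: $M_Q$ (and $H_Q$) carry the topology of uniform convergence on compacta: a sequence $f_n\in M_Q$ converges to $f\in M_Q$ if for each compact $K\subset\mathbb{C}$ and each $\epsilon>0$ there is $n_0$ such that for $n>n_0$ the functions $f$ and $f_n$ have the same poles with the same principal parts on $K$ and $|f(z)-f_n(z)|<\epsilon$ for all $z\in K$. A basic neighbourhood of $f$ is of the form $\{g\in M_Q:\max_{s\in K}|f(s)-g(s)|<\epsilon\}$ for compact $K$ and $\epsilon>0$. *)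

theory Defs
  imports "HOL-Complex_Analysis.Complex_Analysis"
begin

text \<open>A meromorphic function on the plane is represented by its canonical
  ("nicely meromorphic") representative: removable singularities are filled in,
  and the value at a pole is 0.  "Not identically zero" is expressed as a
  property of the germ (independent of the representative).\<close>

definition not_ident_zero :: "(complex \<Rightarrow> complex) \<Rightarrow> bool" where
  "not_ident_zero f \<longleftrightarrow> (\<exists>z. \<not> (\<forall>\<^sub>F w in at z. f w = 0))"

definition MQ :: "(complex \<Rightarrow> complex) \<Rightarrow> (complex \<Rightarrow> complex) set" where
  "MQ Q = {f. f nicely_meromorphic_on UNIV \<and> not_ident_zero f \<and>
              (\<forall>z. \<forall>\<^sub>F s in at z. Q s * f s = Q (1 - s) * f (1 - s))}"

definition HQ :: "(complex \<Rightarrow> complex) \<Rightarrow> (complex \<Rightarrow> complex) set" where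
  "HQ Q = {f \<in> MQ Q. f holomorphic_on UNIV}"

definition mero_zero :: "(complex \<Rightarrow> complex) \<Rightarrow> complex \<Rightarrow> bool" where
  "mero_zero F z \<longleftrightarrow> (F \<longlongrightarrow> 0) (at z)"

definition Lambda_Q :: "(complex \<Rightarrow> complex) \<Rightarrow> (complex \<Rightarrow> complex) \<Rightarrow> complex \<Rightarrow> complex" where
  "Lambda_Q Q f = (\<lambda>s. Q s * f s)"

definition RMQ :: "(complex \<Rightarrow> complex) \<Rightarrow> (complex \<Rightarrow> complex) set" where
  "RMQ Q = {f \<in> MQ Q. \<forall>z. mero_zero (Lambda_Q Q f) z \<longrightarrow> Re z = 1/2}"

definition RHQ :: "(complex \<Rightarrow> complex) \<Rightarrow> (complex \<Rightarrow> complex) set" where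
  "RHQ Q = {f \<in> HQ Q. \<forall>z. mero_zero (Lambda_Q Q f) z \<longrightarrow> Re z = 1/2}"

text \<open>Basic neighbourhood of f in a family A for compact K and eps > 0:
  g has the same poles with the same principal parts as f on K (i.e. f - g has
  only removable singularities on K), and the continuous extension of f - g
  has modulus < eps on K (equivalently its maximum on K is < eps).\<close>

definition mero_nbhd ::
  "(complex \<Rightarrow> complex) set \<Rightarrow> (complex \<Rightarrow> complex) \<Rightarrow> complex set \<Rightarrow> real \<Rightarrow> (complex \<Rightarrow> complex) set" where
  "mero_nbhd A f K e = {g \<in> A. \<forall>z\<in>K. \<exists>c. ((\<lambda>w. f w - g w) \<longlongrightarrow> c) (at z) \<and> norm c < e}"

text \<open>Open and dense subsets of A in the topology of uniform convergence on compacta.\<close>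

definition mero_open :: "(complex \<Rightarrow> complex) set \<Rightarrow> (complex \<Rightarrow> complex) set \<Rightarrow> bool" where
  "mero_open A U \<longleftrightarrow> U \<subseteq> A \<and>
     (\<forall>f\<in>U. \<exists>K e. compact K \<and> e > 0 \<and> mero_nbhd A f K e \<subseteq> U)"

definition mero_dense :: "(complex \<Rightarrow> complex) set \<Rightarrow> (complex \<Rightarrow> complex) set \<Rightarrow> bool" where
  "mero_dense A S \<longleftrightarrow> S \<subseteq> A \<and>
     (\<forall>f\<in>A. \<forall>K e. compact K \<and> e > 0 \<longrightarrow> mero_nbhd A f K e \<inter> S \<noteq> {})"

end

theory Submission
  imports Defs
begin

(* Openness: if \<Lambda>_Q(f) = Q f vanishes at z0 off the critical line, take a small circle
   around z0 on which f and Q are analytic and zero-free.  For g close to f we get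
   |f - g| < |f| on the circle.  If \<Lambda>_Q(g) had no zero in the disc, f/g would extend
   holomorphically with value 0 at z0 and real part > 1/2 on the circle, contradicting
   the minimum principle for Re (f/g).

   Density: replace f by f m with m = 1 - p q.  The polynomial p is invariant under
   s \<mapsto> 1 - s and cancels the poles of f on K; q = ((s - 1/2)^2 / (a - 1/2)^2)^M / p(a)
   is uniformly tiny on K for large M.  Then f m still satisfies the functional equation,
   is close to f on K, and \<Lambda>_Q(f m) vanishes at the off-critical point a. *)

lemma eventually_analytic_at_if_meromorphic:
  assumes "F meromorphic_on UNIV"
  shows "\<forall>\<^sub>F s in at z. F analytic_on {s}"
  by (rule eventually_cosparse_imp_eventually_at[OF meromorphic_on_imp_analytic_cosparse[OF assms]]) auto

lemma eventually_nonzero_if_not_ident_zero: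
  assumes "F meromorphic_on UNIV" "not_ident_zero F"
  shows "\<forall>\<^sub>F s in at z. F s \<noteq> 0"
proof -
  have "eventually (\<lambda>z. F z = 0) (cosparse UNIV) \<or> eventually (\<lambda>z. F z \<noteq> 0) (cosparse UNIV)"
    by (rule meromorphic_imp_constant_or_avoid[OF assms(1)]) auto
  with assms(2) show ?thesis
    by (auto simp: eventually_cosparse_open_eq not_ident_zero_def)
qed

lemma not_ident_zeroI:
  assumes "F analytic_on {z}" "F z \<noteq> 0"
  shows "not_ident_zero F"
proof -
  have "F \<midarrow>z\<rightarrow> F z"
    using assms(1) by (intro isContD analytic_at_imp_isCont)
  hence "\<not> (\<forall>\<^sub>F w in at z. F w = 0)"
    using assms(2) tendsto_eventually tendsto_unique[OF at_neq_bot] by blast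
  thus ?thesis unfolding not_ident_zero_def by blast
qed

lemma eventually_at_reflect:
  fixes z :: complex
  assumes "\<forall>\<^sub>F w in at (1 - z). P w"
  shows "\<forall>\<^sub>F s in at z. P (1 - s)"
proof -
  obtain d where "d > 0" "\<And>w. w \<noteq> 1 - z \<Longrightarrow> dist w (1 - z) < d \<Longrightarrow> P w"
    using assms unfolding eventually_at by blast
  moreover have "dist (1 - s) (1 - z) = dist s z" for s
    by (simp add: dist_norm norm_minus_commute)
  ultimately show ?thesis
    unfolding eventually_at by (metis right_minus_eq diff_diff_eq2 diff_add_cancel)
qed

lemma eventually_at_imp_punctured_cball:
  fixes z :: "'a::metric_space"
  assumes "eventually P (at z)"
  shows "\<exists>r>0. \<forall>s\<in>cball z r - {z}. P s"
proof -
  obtain d where "d > 0" "\<And>s. s \<noteq> z \<Longrightarrow> dist s z < d \<Longrightarrow> P s"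
    using assms unfolding eventually_at by blast
  thus ?thesis by (intro exI[of _ "d / 2"]) (auto simp: dist_commute)
qed

lemma Re_gt_half_if_closer_to_one:
  fixes w :: complex
  assumes "norm (w - 1) < norm w"
  shows "Re w > 1/2"
proof -
  have "norm (w - 1)^2 < norm w ^2"
    using assms by (intro power_strict_mono) auto
  hence "(Re w - 1)^2 + (Im w)^2 < (Re w)^2 + (Im w)^2"
    by (simp add: cmod_power2)
  thus ?thesis by (simp add: power2_eq_square algebra_simps)
qed

lemma Re_holomorphic_ge_frontier:
  assumes "W holomorphic_on interior S" "continuous_on (closure S) W" "bounded S"
    and "\<And>z. z \<in> frontier S \<Longrightarrow> c \<le> Re (W z)" "\<xi> \<in> S"
  shows "c \<le> Re (W \<xi>)"
proof -
  have "norm (exp (- W \<xi>)) \<le> exp (- c)"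
    by (rule maximum_modulus_frontier[where f = "\<lambda>s. exp (- W s)"])
       (use assms in \<open>auto intro!: holomorphic_intros continuous_intros\<close>)
  thus ?thesis by simp
qed

lemma not_essential_bounded_below:
  fixes G :: "complex \<Rightarrow> complex"
  assumes "not_essential G z" "\<not> (G \<longlongrightarrow> 0) (at z)"
  shows "\<exists>c>0. \<forall>\<^sub>F s in at z. c \<le> norm (G s)"
  using assms(1) unfolding not_essential_def
proof (elim disjE exE)
  fix L assume L: "(G \<longlongrightarrow> L) (at z)"
  with assms(2) have "norm L / 2 > 0" by auto
  moreover have "((\<lambda>s. norm (G s)) \<longlongrightarrow> norm L) (at z)"
    using L by (intro tendsto_intros)
  hence "\<forall>\<^sub>F s in at z. norm L / 2 < norm (G s)"
    by (rule order_tendstoD) (use calculation in auto)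
  ultimately show ?thesis
    by (auto intro!: exI[of _ "norm L / 2"] elim: eventually_mono)
next
  assume "is_pole G z"
  hence "\<forall>\<^sub>F s in at z. 1 \<le> norm (G s)"
    unfolding is_pole_def by (auto dest!: filterlim_at_infinity_imp_norm_at_top simp: filterlim_at_top)
  thus ?thesis by (auto intro!: exI[of _ 1])
qed

lemma quotient_extends_holomorphically:
  fixes F G :: "complex \<Rightarrow> complex"
  assumes r: "0 < r"
    and F: "F analytic_on cball z0 r - {z0}" "(F \<longlongrightarrow> 0) (at z0)"
    and G: "G analytic_on cball z0 r - {z0}" "\<And>z. z \<in> cball z0 r - {z0} \<Longrightarrow> G z \<noteq> 0"
    and G_below: "c > 0" "\<forall>\<^sub>F s in at z0. c \<le> norm (G s)"
  defines "W \<equiv> \<lambda>s. if s = z0 then 0 else F s / G s"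
  shows "W holomorphic_on ball z0 r \<and> continuous_on (cball z0 r) W"
proof
  have W_z0: "(W \<longlongrightarrow> 0) (at z0)"
  proof (rule Lim_null_comparison)
    show "\<forall>\<^sub>F s in at z0. norm (W s) \<le> norm (F s) / c"
      using G_below(2) eventually_neq_at_within[of z0 z0 UNIV]
      by eventually_elim (use G_below(1) in \<open>auto simp: W_def norm_divide intro!: divide_left_mono mult_pos_pos\<close>)
    show "((\<lambda>s. norm (F s) / c) \<longlongrightarrow> 0) (at z0)"
      using F(2) by (intro tendsto_divide_zero tendsto_norm_zero)
  qed
  have cont: "isCont F z" "isCont G z" if "z \<in> cball z0 r - {z0}" for z
    using F(1) G(1) that by (auto intro!: analytic_at_imp_isCont elim: analytic_on_subset)
  have "isCont W z" if "z \<in> cball z0 r" for z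
  proof (cases "z = z0")
    case False
    have "\<forall>\<^sub>F s in nhds z. F s / G s = W s"
      using t1_space_nhds[OF False] by eventually_elim (auto simp: W_def)
    moreover have "z \<in> cball z0 r - {z0}" using that False by simp
    ultimately show ?thesis
      using cont G(2) isCont_divide by (metis isCont_cong)
  qed (use W_z0 in \<open>simp add: isCont_def W_def\<close>)
  thus "continuous_on (cball z0 r) W"
    by (intro continuous_at_imp_continuous_on) auto
  show "W holomorphic_on ball z0 r"
  proof (rule no_isolated_singularity'[where K = "{z0}"])
    have "ball z0 r - {z0} \<subseteq> cball z0 r - {z0}" by auto
    hence "(\<lambda>s. F s / G s) holomorphic_on ball z0 r - {z0}"
      using F(1) G
      by (intro holomorphic_on_divide analytic_imp_holomorphic) (auto intro: analytic_on_subset)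
    thus "W holomorphic_on ball z0 r - {z0}"
      by (rule holomorphic_transform) (auto simp: W_def)
    show "(W \<longlongrightarrow> W z) (at z within ball z0 r)" if "z \<in> {z0}" for z
      using W_z0 r that at_within_open[of z0 "ball z0 r"] by (simp add: W_def)
  qed auto
qed

lemma tendsto_zero_persists_under_small_perturbation:
  fixes F G :: "complex \<Rightarrow> complex"
  assumes r: "0 < r"
    and F: "F analytic_on cball z0 r - {z0}" "(F \<longlongrightarrow> 0) (at z0)"
    and G: "G analytic_on cball z0 r - {z0}" "not_essential G z0"
    and close: "\<And>z. z \<in> sphere z0 r \<Longrightarrow> norm (F z - G z) < norm (F z)"
  shows "\<exists>z\<in>cball z0 r. (G \<longlongrightarrow> 0) (at z)"
proof (rule ccontr)
  assume no_zero: "\<not> ?thesis"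
  have G_nz: "G z \<noteq> 0" if "z \<in> cball z0 r - {z0}" for z
  proof -
    have "isCont G z"
      using G(1) that by (auto intro!: analytic_at_imp_isCont elim: analytic_on_subset)
    with no_zero that show ?thesis by (metis DiffD1 isContD)
  qed
  obtain c where c: "c > 0" "\<forall>\<^sub>F s in at z0. c \<le> norm (G s)"
    using not_essential_bounded_below[OF G(2)] no_zero r by fastforce
  define W where "W = (\<lambda>s. if s = z0 then 0 else F s / G s)"
  have W: "W holomorphic_on ball z0 r" "continuous_on (cball z0 r) W"
    using quotient_extends_holomorphically[OF r F G(1) G_nz c] unfolding W_def by blast+
  have W_sphere: "1/2 < Re (W z)" if "z \<in> sphere z0 r" for z
  proof (rule Re_gt_half_if_closer_to_one)
    have z: "z \<in> cball z0 r - {z0}" using that r by auto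
    have "W z - 1 = (F z - G z) / G z"
      using z G_nz[OF z] by (simp add: W_def diff_divide_distrib)
    hence "norm (W z - 1) = norm (F z - G z) / norm (G z)"
      by (simp add: norm_divide)
    also have "\<dots> < norm (F z) / norm (G z)"
      using close[OF that] G_nz[OF z] by (intro divide_strict_right_mono) auto
    also have "\<dots> = norm (W z)" using z by (simp add: W_def norm_divide)
    finally show "norm (W z - 1) < norm (W z)" .
  qed
  have "1/2 \<le> Re (W z0)"
    by (rule Re_holomorphic_ge_frontier[where S = "ball z0 r"])
       (use r W W_sphere in \<open>simp_all add: less_imp_le\<close>)
  thus False by (simp add: W_def)
qed

lemma analytic_at_if_diff_tendsto:
  assumes "g nicely_meromorphic_on UNIV" "f analytic_on {z}" "((\<lambda>w. f w - g w) \<longlongrightarrow> c) (at z)"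
  shows "g analytic_on {z} \<and> g z = f z - c"
proof -
  have "f \<midarrow>z\<rightarrow> f z"
    using assms(2) by (intro isContD analytic_at_imp_isCont)
  hence "((\<lambda>w. f w - (f w - g w)) \<longlongrightarrow> f z - c) (at z)"
    using assms(3) by (intro tendsto_diff)
  hence lim: "g \<midarrow>z\<rightarrow> f z - c" by simp
  hence "\<not> is_pole g z"
    unfolding is_pole_def using not_tendsto_and_filterlim_at_infinity[of "at z" g] by auto
  hence an: "g analytic_on {z}"
    using nicely_meromorphic_on_imp_analytic_at[OF assms(1)] by blast
  hence "g \<midarrow>z\<rightarrow> g z" by (intro isContD analytic_at_imp_isCont)
  with lim have "g z = f z - c" using tendsto_unique[OF at_neq_bot] by blast
  with an show ?thesis by blast
qed

lemma mero_zero_Lambda_Q_persists: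
  assumes Qm: "Q meromorphic_on UNIV" and r: "0 < r"
    and good: "\<forall>s\<in>cball z0 r - {z0}. f analytic_on {s} \<and> Q analytic_on {s} \<and> Q s \<noteq> 0"
    and zero: "mero_zero (Lambda_Q Q f) z0"
    and g: "g nicely_meromorphic_on UNIV"
    and close: "\<forall>z\<in>cball z0 r. \<exists>c. ((\<lambda>w. f w - g w) \<longlongrightarrow> c) (at z) \<and> norm c < e"
    and sphere: "\<And>z. z \<in> sphere z0 r \<Longrightarrow> e \<le> norm (f z)"
  shows "\<exists>z\<in>cball z0 r. mero_zero (Lambda_Q Q g) z"
proof -
  have g_good: "g analytic_on {z} \<and> norm (f z - g z) < e" if z: "z \<in> cball z0 r - {z0}" for z
  proof -
    from z have "z \<in> cball z0 r" by simp
    then obtain c where c: "((\<lambda>w. f w - g w) \<longlongrightarrow> c) (at z)" "norm c < e"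
      using close by blast
    have "g analytic_on {z} \<and> g z = f z - c"
      using analytic_at_if_diff_tendsto[OF g _ c(1)] good[rule_format, OF z] by blast
    with c(2) show ?thesis by simp
  qed
  have "\<exists>z\<in>cball z0 r. (Lambda_Q Q g \<longlongrightarrow> 0) (at z)"
  proof (rule tendsto_zero_persists_under_small_perturbation[where F = "Lambda_Q Q f"])
    have "Lambda_Q Q f analytic_on {z} \<and> Lambda_Q Q g analytic_on {z}"
      if "z \<in> cball z0 r - {z0}" for z
      using good[rule_format, OF that] g_good[OF that] by (simp add: Lambda_Q_def analytic_on_mult)
    thus "Lambda_Q Q f analytic_on cball z0 r - {z0}" "Lambda_Q Q g analytic_on cball z0 r - {z0}"
      unfolding analytic_on_analytic_at[of _ "cball z0 r - {z0}"] by blast+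
    show "(Lambda_Q Q f \<longlongrightarrow> 0) (at z0)" using zero by (simp add: mero_zero_def)
    have "g meromorphic_on UNIV" using g by (simp add: nicely_meromorphic_on_def)
    hence "Lambda_Q Q g meromorphic_on UNIV"
      unfolding Lambda_Q_def by (rule meromorphic_on_mult[OF Qm])
    thus "not_essential (Lambda_Q Q g) z0"
      by (rule meromorphic_on_not_essential[OF meromorphic_on_subset]) auto
    fix z assume z: "z \<in> sphere z0 r"
    hence z': "z \<in> cball z0 r - {z0}" using r by auto
    have "norm (f z - g z) < norm (f z)"
      using g_good[OF z'] sphere[OF z] by simp
    thus "norm (Lambda_Q Q f z - Lambda_Q Q g z) < norm (Lambda_Q Q f z)"
      using good[rule_format, OF z'] by (simp add: Lambda_Q_def norm_mult flip: right_diff_distrib)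
  qed fact
  thus ?thesis by (simp add: mero_zero_def)
qed

lemma offcritical_zero_stable:
  assumes Qm: "Q meromorphic_on UNIV" and Qnz: "not_ident_zero Q"
    and f: "f \<in> MQ Q" and z0: "Re z0 \<noteq> 1/2" "mero_zero (Lambda_Q Q f) z0"
  shows "\<exists>K e. compact K \<and> e > 0 \<and> mero_nbhd (MQ Q) f K e \<subseteq> MQ Q - RMQ Q"
proof -
  have fm: "f meromorphic_on UNIV" and fnz: "not_ident_zero f"
    using f by (auto simp: MQ_def nicely_meromorphic_on_def)
  have "open {s. Re s \<noteq> 1/2}" by (intro open_Collect_neq continuous_intros)
  from eventually_at_in_open'[OF this] have "\<forall>\<^sub>F s in at z0. Re s \<noteq> 1/2" using z0(1) by simp
  hence "\<forall>\<^sub>F s in at z0. Re s \<noteq> 1/2 \<and> f analytic_on {s} \<and> f s \<noteq> 0 \<and> Q analytic_on {s} \<and> Q s \<noteq> 0"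
    using eventually_analytic_at_if_meromorphic[OF fm] eventually_nonzero_if_not_ident_zero[OF fm fnz]
      eventually_analytic_at_if_meromorphic[OF Qm] eventually_nonzero_if_not_ident_zero[OF Qm Qnz]
    by eventually_elim blast
  then obtain r where r: "r > 0" and good: "\<forall>s\<in>cball z0 r - {z0}.
      Re s \<noteq> 1/2 \<and> f analytic_on {s} \<and> f s \<noteq> 0 \<and> Q analytic_on {s} \<and> Q s \<noteq> 0"
    using eventually_at_imp_punctured_cball by blast
  have "continuous_on (sphere z0 r) (\<lambda>s. norm (f s))"
    using good r by (intro continuous_at_imp_continuous_on ballI continuous_norm analytic_at_imp_isCont) auto
  moreover have "sphere z0 r \<noteq> {}" using r by simp
  ultimately obtain x0 where x0: "x0 \<in> sphere z0 r" "\<And>y. y \<in> sphere z0 r \<Longrightarrow> norm (f x0) \<le> norm (f y)"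
    using continuous_attains_inf[OF compact_sphere] by blast
  have e: "norm (f x0) > 0" using good x0(1) r by auto
  have "mero_nbhd (MQ Q) f (cball z0 r) (norm (f x0)) \<subseteq> MQ Q - RMQ Q"
  proof
    fix g assume "g \<in> mero_nbhd (MQ Q) f (cball z0 r) (norm (f x0))"
    hence gM: "g \<in> MQ Q"
      and close: "\<forall>z\<in>cball z0 r. \<exists>c. ((\<lambda>w. f w - g w) \<longlongrightarrow> c) (at z) \<and> norm c < norm (f x0)"
      by (auto simp: mero_nbhd_def)
    have "g nicely_meromorphic_on UNIV" using gM by (simp add: MQ_def)
    moreover have "\<forall>s\<in>cball z0 r - {z0}. f analytic_on {s} \<and> Q analytic_on {s} \<and> Q s \<noteq> 0"
      using good by blast
    ultimately obtain z where "z \<in> cball z0 r" "mero_zero (Lambda_Q Q g) z"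
      using mero_zero_Lambda_Q_persists[OF Qm r _ z0(2) _ close x0(2)] by blast
    moreover from this(1) have "Re z \<noteq> 1/2" using good z0(1) by (cases "z = z0") auto
    ultimately show "g \<in> MQ Q - RMQ Q" unfolding RMQ_def using gM by blast
  qed
  with e show ?thesis by (intro exI[of _ "cball z0 r"] exI[of _ "norm (f x0)"]) simp
qed

lemma tendsto_mult_power_at_meromorphic:
  fixes f :: "complex \<Rightarrow> complex"
  assumes "f meromorphic_on {b}"
  shows "\<exists>n c. ((\<lambda>w. f w * (w - b) ^ n) \<longlongrightarrow> c) (at b)"
proof (cases "is_pole f b")
  case False
  then obtain c where "(f \<longlongrightarrow> c) (at b)"
    using meromorphic_on_not_essential[OF assms] unfolding not_essential_def by blast
  thus ?thesis by (intro exI[of _ 0] exI[of _ c]) simp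
next
  case True
  have iso: "isolated_singularity_at f b"
    using assms by (rule meromorphic_on_isolated_singularity)
  have "\<exists>\<^sub>F w in at b. f w \<noteq> 0"
    using non_zero_neighbour_pole[OF True] by (rule eventually_frequently[OF at_neq_bot])
  then obtain r where "r > 0" "zor_poly f b holomorphic_on cball b r"
    using zorder_exist[OF iso is_pole_imp_not_essential[OF True]] by blast
  hence "isCont (zor_poly f b) b"
    by (intro continuous_on_interior[OF holomorphic_on_imp_continuous_on]) auto
  hence "(zor_poly f b \<longlongrightarrow> zor_poly f b b) (at b)" by (rule isContD)
  hence "((\<lambda>w. f w * (w - b) ^ nat (- zorder f b)) \<longlongrightarrow> zor_poly f b b) (at b)"
    by (rule Lim_transform_eventually[OF _ zor_poly_pole_eq[OF iso True]])
  thus ?thesis by blast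
qed

lemma uniform_pole_order_bound:
  fixes f :: "complex \<Rightarrow> complex"
  assumes "f meromorphic_on P" "finite P"
  shows "\<exists>N. \<forall>b\<in>P. \<exists>c. ((\<lambda>w. f w * (w - b) ^ N) \<longlongrightarrow> c) (at b)"
proof -
  have "\<forall>b\<in>P. \<exists>n c. ((\<lambda>w. f w * (w - b) ^ n) \<longlongrightarrow> c) (at b)"
    using assms(1) by (auto intro: tendsto_mult_power_at_meromorphic meromorphic_on_subset)
  then obtain n c where nc: "\<And>b. b \<in> P \<Longrightarrow> ((\<lambda>w. f w * (w - b) ^ n b) \<longlongrightarrow> c b) (at b)"
    by metis
  define N where "N = sum n P"
  have "((\<lambda>w. f w * (w - b) ^ N) \<longlongrightarrow> c b * 0 ^ (N - n b)) (at b)" if b: "b \<in> P" for b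
  proof -
    have le: "n b \<le> N" unfolding N_def using assms(2) b by (intro member_le_sum) auto
    have "((\<lambda>w. (f w * (w - b) ^ n b) * (w - b) ^ (N - n b)) \<longlongrightarrow> c b * (b - b) ^ (N - n b)) (at b)"
      by (intro tendsto_intros nc b)
    moreover have "(f w * (w - b) ^ n b) * (w - b) ^ (N - n b) = f w * (w - b) ^ N" for w
      using le by (simp add: mult.assoc flip: power_add)
    ultimately show ?thesis by simp
  qed
  thus ?thesis by blast
qed

lemma bounded_limits_on_compact:
  fixes G :: "complex \<Rightarrow> complex"
  assumes G: "G meromorphic_on K" and K: "compact K" and lim: "\<forall>z\<in>K. \<exists>L. (G \<longlongrightarrow> L) (at z)"
  shows "\<exists>B>0. \<forall>z\<in>K. \<exists>L. (G \<longlongrightarrow> L) (at z) \<and> norm L \<le> B"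
proof -
  have iso: "isolated_singularity_at G z" if "z \<in> K" for z
    using meromorphic_on_subset[OF G] that by (intro meromorphic_on_isolated_singularity) auto
  have lim': "(G \<longlongrightarrow> remove_sings G z) (at z)" if "z \<in> K" for z
    using lim that remove_sings_eqI by fastforce
  have "continuous_on K (remove_sings G)"
    using iso lim' by (intro continuous_at_imp_continuous_on ballI analytic_at_imp_isCont remove_sings_analytic_at)
  hence "bounded (remove_sings G ` K)"
    using K by (intro compact_imp_bounded compact_continuous_image)
  then obtain B where "B > 0" "\<forall>z\<in>K. norm (remove_sings G z) \<le> B"
    unfolding bounded_pos by blast
  with lim' show ?thesis by blast
qed

lemma finite_zeros_reflected_prod:
  fixes P :: "complex set"
  assumes "finite P"
  shows "finite {s. (\<Prod>b\<in>P. ((s - b) * (1 - s - b)) ^ N) = 0}"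
proof (rule finite_subset)
  show "{s. (\<Prod>b\<in>P. ((s - b) * (1 - s - b)) ^ N) = 0} \<subseteq> P \<union> (\<lambda>b. 1 - b) ` P"
  proof
    fix s assume "s \<in> {s. (\<Prod>b\<in>P. ((s - b) * (1 - s - b)) ^ N) = 0}"
    then obtain b where b: "b \<in> P" "(s - b) * (1 - s - b) = 0"
      using assms by (auto simp: prod_zero_iff)
    hence "s = b \<or> 1 - s = b" by simp
    hence "s = b \<or> s = 1 - b" by auto
    with b(1) show "s \<in> P \<union> (\<lambda>b. 1 - b) ` P" by auto
  qed
qed (use assms in simp)

lemma symmetric_pole_clearing:
  fixes f :: "complex \<Rightarrow> complex"
  assumes fm: "f meromorphic_on UNIV" and K: "compact K"
  shows "\<exists>p B. p analytic_on UNIV \<and> (\<forall>s. p (1 - s) = p s) \<and> finite {s. p s = 0} \<and> B > 0 \<and>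
             (\<forall>z\<in>K. \<exists>L. ((\<lambda>w. f w * p w) \<longlongrightarrow> L) (at z) \<and> norm L \<le> B)"
proof -
  define P where "P = K \<inter> {w. \<not> f analytic_on {w}}"
  have finP: "finite P"
    unfolding P_def using K meromorphic_on_imp_sparse_singularities[OF fm]
    by (intro sparse_in_compact_finite) (auto elim: sparse_in_subset)
  obtain N where N: "\<And>b. b \<in> P \<Longrightarrow> \<exists>c. ((\<lambda>w. f w * (w - b) ^ N) \<longlongrightarrow> c) (at b)"
    using uniform_pole_order_bound[OF meromorphic_on_subset[OF fm] finP] by blast
  define p where "p = (\<lambda>s. \<Prod>b\<in>P. ((s - b) * (1 - s - b)) ^ N)"
  have p_an: "p analytic_on UNIV" unfolding p_def by (intro analytic_intros)
  have "p (1 - s) = p s" for s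
    unfolding p_def by (intro prod.cong) (auto simp: algebra_simps)
  moreover have "finite {s. p s = 0}"
    unfolding p_def using finP by (rule finite_zeros_reflected_prod)
  moreover have "\<exists>L. ((\<lambda>w. f w * p w) \<longlongrightarrow> L) (at z)" if z: "z \<in> K" for z
  proof (cases "z \<in> P")
    case True
    obtain c where c: "((\<lambda>w. f w * (w - z) ^ N) \<longlongrightarrow> c) (at z)" using N[OF True] by blast
    define q where "q = (\<lambda>s. (1 - s - z) ^ N * (\<Prod>b\<in>P - {z}. ((s - b) * (1 - s - b)) ^ N))"
    have "isCont q z" unfolding q_def by (intro continuous_intros)
    hence "((\<lambda>w. (f w * (w - z) ^ N) * q w) \<longlongrightarrow> c * q z) (at z)"
      using c by (intro tendsto_mult isContD)
    moreover have "(f w * (w - z) ^ N) * q w = f w * p w" for w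
      unfolding p_def q_def using finP True by (simp add: prod.remove power_mult_distrib mult_ac)
    ultimately show ?thesis by auto
  next
    case False
    with z have "f analytic_on {z}" by (simp add: P_def)
    moreover have "p analytic_on {z}" using p_an by (rule analytic_on_subset) simp
    ultimately have "isCont (\<lambda>w. f w * p w) z"
      by (intro continuous_mult analytic_at_imp_isCont)
    thus ?thesis by (auto dest: isContD)
  qed
  moreover have "(\<lambda>w. f w * p w) meromorphic_on K"
    using meromorphic_on_mult[OF fm analytic_on_imp_meromorphic_on[OF p_an]]
    by (rule meromorphic_on_subset) simp
  ultimately show ?thesis using p_an bounded_limits_on_compact[OF _ K] by meson
qed

lemma small_symmetric_multiplier:
  fixes a c :: complex
  assumes R: "0 \<le> R" "R < norm (a - 1/2)" and c: "c \<noteq> 0" and e: "e > 0"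
  shows "\<exists>q. q analytic_on UNIV \<and> (\<forall>s. q (1 - s) = q s) \<and> q (1/2) = 0 \<and> c * q a = 1 \<and>
             (\<forall>z. norm (z - 1/2) \<le> R \<longrightarrow> norm (q z) < e)"
proof -
  define \<rho> where "\<rho> = (R / norm (a - 1/2))^2"
  have \<rho>: "0 \<le> \<rho>" "\<rho> < 1"
    using R by (auto simp: \<rho>_def power_less_one_iff divide_less_eq)
  obtain M0 where M0: "\<rho> ^ M0 < e * norm c"
    using real_arch_pow_inv[of "e * norm c" \<rho>] e c \<rho>(2) by auto
  define M where "M = Suc M0"
  define q where "q = (\<lambda>s. ((s - 1/2)^2 / (a - 1/2)^2) ^ M / c)"
  have a: "a - 1/2 \<noteq> 0" using R by (metis norm_zero not_less)
  have "q analytic_on UNIV" unfolding q_def using a c by (intro analytic_intros) auto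
  moreover have "q (1 - s) = q s" for s
  proof -
    have "(1 - s - 1/2)^2 = (s - 1/2)^2" by (simp add: power2_eq_square algebra_simps)
    thus ?thesis by (simp add: q_def)
  qed
  moreover have "q (1/2) = 0" by (simp add: q_def M_def)
  moreover have "c * q a = 1" using a c by (simp add: q_def)
  moreover have "norm (q z) < e" if z: "norm (z - 1/2) \<le> R" for z
  proof -
    have "norm ((z - 1/2)^2 / (a - 1/2)^2) = (norm (z - 1/2) / norm (a - 1/2))^2"
      by (simp add: norm_divide norm_power power_divide)
    also have "\<dots> \<le> \<rho>"
      unfolding \<rho>_def using z by (intro power_mono divide_right_mono) auto
    finally have "norm ((z - 1/2)^2 / (a - 1/2)^2) ^ M \<le> \<rho> ^ M"
      by (intro power_mono) auto
    hence "norm (q z) \<le> \<rho> ^ M / norm c"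
      unfolding q_def norm_divide norm_power by (rule divide_right_mono) simp
    also have "\<dots> \<le> \<rho> ^ M0 / norm c"
      using \<rho> by (intro divide_right_mono power_decreasing) (auto simp: M_def)
    also have "\<dots> < e" using M0 c by (simp add: divide_less_eq mult.commute)
    finally show ?thesis .
  qed
  ultimately show ?thesis by blast
qed

lemma exists_offcritical_regular_point:
  fixes Q f :: "complex \<Rightarrow> complex"
  assumes Qm: "Q meromorphic_on UNIV" and fm: "f meromorphic_on UNIV" and Z: "finite Z" and R: "0 \<le> R"
  shows "\<exists>a. R < norm (a - 1/2) \<and> Re a \<noteq> 1/2 \<and> Q analytic_on {a} \<and> f analytic_on {a} \<and> a \<notin> Z"
proof -
  define a0 where "a0 = complex_of_real (R + 2)"
  have "\<forall>\<^sub>F s in at a0. \<forall>y\<in>Z. s \<noteq> y"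
    using Z by (intro eventually_ball_finite) (auto simp: eventually_neq_at_within)
  hence "\<forall>\<^sub>F s in at a0. Q analytic_on {s} \<and> f analytic_on {s} \<and> s \<notin> Z \<and> s \<in> ball a0 1"
    using eventually_analytic_at_if_meromorphic[OF Qm] eventually_analytic_at_if_meromorphic[OF fm]
      eventually_at_ball[OF zero_less_one, of a0 UNIV]
    by eventually_elim auto
  then obtain a where a: "Q analytic_on {a}" "f analytic_on {a}" "a \<notin> Z" "a \<in> ball a0 1"
    using eventually_happens'[OF at_neq_bot] by blast
  have "\<bar>Re a - (R + 2)\<bar> < 1"
    using a(4) complex_Re_le_cmod[of "a0 - a"] abs_Re_le_cmod[of "a0 - a"]
    by (simp add: a0_def dist_norm)
  hence Re_a: "R + 1 < Re a" by linarith
  have "R < Re (a - 1/2)" using Re_a by simp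
  also have "\<dots> \<le> norm (a - 1/2)" by (rule complex_Re_le_cmod)
  finally show ?thesis using a(1-3) Re_a R by auto
qed

lemma symmetric_multiplier_vanishing_offcritical:
  fixes Q f :: "complex \<Rightarrow> complex"
  assumes Qm: "Q meromorphic_on UNIV" and fm: "f meromorphic_on UNIV" and K: "compact K" and e: "e > 0"
  shows "\<exists>m a. m analytic_on UNIV \<and> (\<forall>s. m (1 - s) = m s) \<and> not_ident_zero m \<and>
           Re a \<noteq> 1/2 \<and> Q analytic_on {a} \<and> f analytic_on {a} \<and> m a = 0 \<and>
           (\<forall>z\<in>K. \<exists>L. ((\<lambda>w. f w * (1 - m w)) \<longlongrightarrow> L) (at z) \<and> norm L < e)"
proof -
  obtain p B where p_an: "p analytic_on UNIV" and p_sym: "\<And>s. p (1 - s) = p s"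
      and p_zeros: "finite {s. p s = 0}"
      and B: "B > 0" "\<forall>z\<in>K. \<exists>L. ((\<lambda>w. f w * p w) \<longlongrightarrow> L) (at z) \<and> norm L \<le> B"
    using symmetric_pole_clearing[OF fm K] by blast
  obtain R where R: "0 \<le> R" "\<And>z. z \<in> K \<Longrightarrow> norm (z - 1/2) \<le> R"
  proof -
    obtain R where "\<forall>z\<in>K. dist (1/2) z \<le> R"
      using compact_imp_bounded[OF K] bounded_any_center by blast
    thus thesis by (intro that[of "max R 0"]) (auto simp: dist_norm norm_minus_commute)
  qed
  obtain a where aR: "R < norm (a - 1/2)" and a: "Re a \<noteq> 1/2" "Q analytic_on {a}" "f analytic_on {a}"
      and pa: "p a \<noteq> 0"
    using exists_offcritical_regular_point[OF Qm fm p_zeros R(1)] by blast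
  have "e / B > 0" using e B(1) by simp
  with aR obtain q where q_an: "q analytic_on UNIV" and q_sym: "\<forall>s. q (1 - s) = q s"
      and q_half: "q (1/2) = 0" and q_a: "p a * q a = 1"
      and q_small: "\<forall>z. norm (z - 1/2) \<le> R \<longrightarrow> norm (q z) < e / B"
    using small_symmetric_multiplier[OF R(1) _ pa] by blast
  define m where "m = (\<lambda>s. 1 - p s * q s)"
  have m_an: "m analytic_on UNIV" unfolding m_def using p_an q_an by (intro analytic_intros)
  have "m (1/2) = 1" by (simp add: m_def q_half)
  hence "not_ident_zero m"
    using analytic_on_subset[OF m_an] by (intro not_ident_zeroI[of m "1/2"]) auto
  moreover have "\<forall>s. m (1 - s) = m s" by (simp add: m_def p_sym q_sym)
  moreover have "m a = 0" by (simp add: m_def q_a)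
  moreover have "\<exists>L. ((\<lambda>w. f w * (1 - m w)) \<longlongrightarrow> L) (at z) \<and> norm L < e" if z: "z \<in> K" for z
  proof -
    obtain L where L: "((\<lambda>w. f w * p w) \<longlongrightarrow> L) (at z)" "norm L \<le> B" using B(2) z by blast
    have "q \<midarrow>z\<rightarrow> q z"
      using analytic_on_subset[OF q_an] by (intro isContD analytic_at_imp_isCont) auto
    with L(1) have "((\<lambda>w. (f w * p w) * q w) \<longlongrightarrow> L * q z) (at z)"
      by (rule tendsto_mult)
    hence "((\<lambda>w. f w * (1 - m w)) \<longlongrightarrow> L * q z) (at z)"
      by (simp add: m_def mult.assoc)
    moreover have "norm (L * q z) < e"
    proof -
      have "norm (L * q z) \<le> B * norm (q z)"
        using L(2) by (simp add: norm_mult mult_right_mono)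
      also have "\<dots> < e"
        using q_small R(2)[OF z] B(1) by (simp add: pos_less_divide_eq mult.commute)
      finally show ?thesis .
    qed
    ultimately show ?thesis by blast
  qed
  ultimately show ?thesis using m_an a by blast
qed

lemma remove_sings_mult_symmetric_in_MQ:
  assumes f: "f \<in> MQ Q" and m: "m analytic_on UNIV" "\<And>s. m (1 - s) = m s" "not_ident_zero m"
  shows "remove_sings (\<lambda>s. f s * m s) \<in> MQ Q"
proof -
  define g where "g = remove_sings (\<lambda>s. f s * m s)"
  have fm: "f meromorphic_on UNIV" and fnz: "not_ident_zero f"
    and feq: "\<And>z. \<forall>\<^sub>F s in at z. Q s * f s = Q (1 - s) * f (1 - s)"
    using f by (auto simp: MQ_def nicely_meromorphic_on_def)
  have mm: "m meromorphic_on UNIV" using m(1) by (rule analytic_on_imp_meromorphic_on)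
  have fmm: "(\<lambda>s. f s * m s) meromorphic_on UNIV"
    using fm mm by (rule meromorphic_on_mult)
  have geq: "\<forall>\<^sub>F s in at z. g s = f s * m s" for z
    unfolding g_def using meromorphic_on_subset[OF fmm]
    by (intro eventually_remove_sings_eq_at meromorphic_on_isolated_singularity) auto
  have "not_ident_zero g"
  proof -
    obtain z where z: "\<not> (\<forall>\<^sub>F w in at z. f w = 0)" using fnz unfolding not_ident_zero_def by blast
    have "\<not> (\<forall>\<^sub>F w in at z. g w = 0)"
    proof
      assume "\<forall>\<^sub>F w in at z. g w = 0"
      with geq[of z] eventually_nonzero_if_not_ident_zero[OF mm m(3), of z]
      have "\<forall>\<^sub>F w in at z. f w = 0" by eventually_elim auto
      with z show False ..
    qed
    thus ?thesis unfolding not_ident_zero_def by blast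
  qed
  moreover have "\<forall>\<^sub>F s in at z. Q s * g s = Q (1 - s) * g (1 - s)" for z
    using geq[of z] eventually_at_reflect[OF geq[of "1 - z"]] feq[of z]
  proof eventually_elim
    case (elim s)
    have "Q s * g s = (Q s * f s) * m s" using elim(1) by simp
    also have "\<dots> = (Q (1 - s) * f (1 - s)) * m (1 - s)" using elim(3) m(2) by simp
    also have "\<dots> = Q (1 - s) * g (1 - s)" using elim(2) by simp
    finally show ?case .
  qed
  moreover have "g nicely_meromorphic_on UNIV"
    unfolding g_def by (rule remove_sings_nicely_meromorphic[OF fmm])
  ultimately show ?thesis by (simp add: MQ_def g_def)
qed

lemma multiplier_gives_offcritical_zero_nearby:
  assumes f: "f \<in> MQ Q" and m: "m analytic_on UNIV" "\<And>s. m (1 - s) = m s" "not_ident_zero m"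
    and a: "Re a \<noteq> 1/2" "Q analytic_on {a}" "f analytic_on {a}" "m a = 0"
    and close: "\<forall>z\<in>K. \<exists>L. ((\<lambda>w. f w * (1 - m w)) \<longlongrightarrow> L) (at z) \<and> norm L < e"
  shows "remove_sings (\<lambda>s. f s * m s) \<in> mero_nbhd (MQ Q) f K e - RMQ Q"
proof -
  define g where "g = remove_sings (\<lambda>s. f s * m s)"
  have gM: "g \<in> MQ Q"
    unfolding g_def using f m by (rule remove_sings_mult_symmetric_in_MQ)
  have "(\<lambda>s. f s * m s) meromorphic_on UNIV"
    using f analytic_on_imp_meromorphic_on[OF m(1)]
    by (intro meromorphic_on_mult) (simp_all add: MQ_def nicely_meromorphic_on_def)
  hence geq: "\<forall>\<^sub>F s in at z. g s = f s * m s" for z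
    unfolding g_def using meromorphic_on_subset
    by (intro eventually_remove_sings_eq_at meromorphic_on_isolated_singularity) blast
  have "\<exists>c. ((\<lambda>w. f w - g w) \<longlongrightarrow> c) (at z) \<and> norm c < e" if z: "z \<in> K" for z
  proof -
    obtain L where L: "((\<lambda>w. f w * (1 - m w)) \<longlongrightarrow> L) (at z)" "norm L < e"
      using close[rule_format, OF z] by blast
    have "\<forall>\<^sub>F w in at z. f w * (1 - m w) = f w - g w"
      using geq[of z] by eventually_elim (simp add: algebra_simps)
    with L(1) have "((\<lambda>w. f w - g w) \<longlongrightarrow> L) (at z)" by (rule Lim_transform_eventually)
    with L(2) show ?thesis by blast
  qed
  moreover have "mero_zero (Lambda_Q Q g) a"
  proof -
    have "((\<lambda>s. Q s * (f s * m s)) \<longlongrightarrow> Q a * (f a * m a)) (at a)"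
      using a(2,3) analytic_on_subset[OF m(1)]
      by (intro tendsto_mult isContD analytic_at_imp_isCont) auto
    moreover have "\<forall>\<^sub>F s in at a. Q s * (f s * m s) = Lambda_Q Q g s"
      using geq[of a] by eventually_elim (simp add: Lambda_Q_def)
    ultimately have "(Lambda_Q Q g \<longlongrightarrow> Q a * (f a * m a)) (at a)"
      by (rule Lim_transform_eventually)
    thus ?thesis unfolding mero_zero_def using a(4) by simp
  qed
  ultimately show ?thesis
    using gM a(1) unfolding g_def by (auto simp: mero_nbhd_def RMQ_def)
qed

lemma offcritical_zero_dense:
  assumes Qm: "Q meromorphic_on UNIV" and f: "f \<in> MQ Q" and K: "compact K" and e: "e > 0"
  shows "\<exists>g\<in>mero_nbhd (MQ Q) f K e - RMQ Q. f holomorphic_on UNIV \<longrightarrow> g holomorphic_on UNIV"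
proof -
  have fm: "f meromorphic_on UNIV" using f by (simp add: MQ_def nicely_meromorphic_on_def)
  obtain m a where m: "m analytic_on UNIV" "\<forall>s. m (1 - s) = m s" "not_ident_zero m"
      and a: "Re a \<noteq> 1/2" "Q analytic_on {a}" "f analytic_on {a}" "m a = 0"
      and close: "\<forall>z\<in>K. \<exists>L. ((\<lambda>w. f w * (1 - m w)) \<longlongrightarrow> L) (at z) \<and> norm L < e"
    using symmetric_multiplier_vanishing_offcritical[OF Qm fm K e] by blast
  have "f holomorphic_on UNIV \<longrightarrow> remove_sings (\<lambda>s. f s * m s) holomorphic_on UNIV"
    using m(1) by (auto simp: analytic_on_open intro!: analytic_imp_holomorphic remove_sings_analytic_on analytic_on_mult)
  moreover have "remove_sings (\<lambda>s. f s * m s) \<in> mero_nbhd (MQ Q) f K e - RMQ Q"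
    using f m(1) m(2)[rule_format] m(3) a close by (rule multiplier_gives_offcritical_zero_nearby)
  ultimately show ?thesis by blast
qed

theorem theorem1:
  fixes Q :: "complex \<Rightarrow> complex"
  assumes "Q meromorphic_on UNIV"
    and "not_ident_zero Q"
  shows "mero_open (MQ Q) (MQ Q - RMQ Q) \<and> mero_dense (MQ Q) (MQ Q - RMQ Q) \<and>
         mero_open (HQ Q) (HQ Q - RHQ Q) \<and> mero_dense (HQ Q) (HQ Q - RHQ Q)"
proof -
  have HQ_minus_RHQ: "HQ Q - RHQ Q = (MQ Q - RMQ Q) \<inter> HQ Q"
    by (auto simp: HQ_def RHQ_def RMQ_def)
  have nbhd_HQ: "mero_nbhd (HQ Q) f K e = mero_nbhd (MQ Q) f K e \<inter> HQ Q" for f K e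
    by (auto simp: mero_nbhd_def HQ_def)
  have stable: "\<exists>K e. compact K \<and> e > 0 \<and> mero_nbhd (MQ Q) f K e \<subseteq> MQ Q - RMQ Q"
    if f: "f \<in> MQ Q - RMQ Q" for f
  proof -
    obtain z where "Re z \<noteq> 1/2" "mero_zero (Lambda_Q Q f) z"
      using f by (auto simp: RMQ_def)
    with f show ?thesis by (intro offcritical_zero_stable[OF assms]) auto
  qed
  have dense: "\<exists>g\<in>mero_nbhd (MQ Q) f K e \<inter> (MQ Q - RMQ Q). f \<in> HQ Q \<longrightarrow> g \<in> HQ Q"
    if "f \<in> MQ Q" "compact K" "e > 0" for f K e
    using offcritical_zero_dense[OF assms(1) that] by (auto simp: HQ_def mero_nbhd_def)
  have "mero_open (MQ Q) (MQ Q - RMQ Q)"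
    unfolding mero_open_def by (intro conjI ballI Diff_subset stable)
  moreover have "mero_open (HQ Q) (HQ Q - RHQ Q)"
    unfolding mero_open_def HQ_minus_RHQ nbhd_HQ
  proof (intro conjI ballI Int_lower2)
    fix f assume "f \<in> (MQ Q - RMQ Q) \<inter> HQ Q"
    with stable obtain K e where "compact K" "e > 0" "mero_nbhd (MQ Q) f K e \<subseteq> MQ Q - RMQ Q"
      by blast
    thus "\<exists>K e. compact K \<and> e > 0 \<and> mero_nbhd (MQ Q) f K e \<inter> HQ Q \<subseteq> (MQ Q - RMQ Q) \<inter> HQ Q"
      by blast
  qed
  moreover have "mero_dense (MQ Q) (MQ Q - RMQ Q)" "mero_dense (HQ Q) (HQ Q - RHQ Q)"
    unfolding mero_dense_def HQ_minus_RHQ nbhd_HQ using dense by (fastforce simp: HQ_def)+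
  ultimately show ?thesis by blast
qed

end
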